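(* Let $n,m\ge1$, $c_1,\dots,c_n>0$, $T>0$, $\epsilon>0$, constant $r_1,\dots,r_m>0$, $\kappa_{ij}\ge0$. Let $\mu_j(q_j)=0$ for $q_j\le c_j$ and $\mu_j(q_j)=T(1-c_j/q_j)$ for $q_j>c_j$, and $\delta_{ij}(\mu)=e^{-(\kappa_{ij}+\mu_j)/\epsilon}/\sum_k e^{-(\kappa_{ik}+\mu_k)/\epsilon}$. Consider the dynamics $$\dot q_j=\sum_{i=1}^m x_{ij}-\frac{q_j}{T},\quad \mu_j=\mu_j(q_j),\quad x_{ij}=r_i\delta_{ij}(\mu),$$ which has a unique equilibrium point $(X^*,q^*,\mu^* )$ (i.e. the unique triple with $\mu^*_j=\mu_j(q^*_j)$, $x^*_{ij}=r_i\delta_{ij}(\mu^* )$, $\sum_ix^*_{ij}=q^*_j/T$). Then any trajectory $(q(t),X(t),\mu(t))$ of these dynamics, with $q(t)$ defined for $t\ge0$ from an arbitrary initial condition, $\mu(t)=\mu(q(t))$, $X(t)=(r_i\delta_{ij}(\mu(t)))$, converges as $t\to\infty$ to $(X^*,q^*,\mu^* )$.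
   Context: The equilibrium coincides with the unique optimum $(X^*,q^* )$ of $\min\sum\kappa_{ij}x_{ij}+\sum_j\beta_j(q_j)+\epsilon\sum x_{ij}\log(x_{ij}/r_i)$ subject to $x_{ij}\ge0$, $\sum_jx_{ij}=r_i$, $\sum_ix_{ij}=q_j/T$, where $\beta_j(q)=\int_0^q[1-c_j/\sigma]^+d\sigma$, together with the optimal Lagrange multiplier $\mu^*$. *)

theory Defs
  imports "HOL-Analysis.Analysis"
begin

definition price :: "real \<Rightarrow> real \<Rightarrow> real \<Rightarrow> real" where
  "price T c q = (if q \<le> c then 0 else T * (1 - c / q))"

definition logit :: "nat \<Rightarrow> real \<Rightarrow> (nat \<Rightarrow> nat \<Rightarrow> real) \<Rightarrow> (nat \<Rightarrow> real) \<Rightarrow> nat \<Rightarrow> nat \<Rightarrow> real" where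
  "logit n eps kappa mu i j =
     exp (- (kappa i j + mu j) / eps) / (\<Sum>k<n. exp (- (kappa i k + mu k) / eps))"

end

theory Submission
  imports Defs
begin

(*
  The trajectory contracts towards the equilibrium qs in the l1 norm. With e = q - qs, the right
  derivative of |e j| is the derivative of e j taken with the sign of e j, and the equilibrium
  equation turns the linear outflow -q/T into -|e|/T. The inflows F satisfy
  Sum_j sgn (e j) (F q j - F qs j) <= 0: prices are nondecreasing in q, so every logit weight
  of a station with e j > 0 (e j < 0) has decreased (increased), while the choice probabilities
  of each user sum to one. Hence L = Sum_j |e j| has right derivative at most -L/T, so
  L t * exp (t/T) is nonincreasing and L decays exponentially.
*)

lemma le_if_locally_nonincreasing_right:
  fixes g :: "real \<Rightarrow> real"
  assumes "a \<le> b" and cont: "continuous_on {a..b} g"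
    and right: "\<And>t. t \<in> {a..<b} \<Longrightarrow> \<exists>\<delta>>0. \<forall>h>0. h < \<delta> \<longrightarrow> g (t + h) \<le> g t"
  shows "g b \<le> g a"
proof (rule ccontr)
  assume "\<not> g b \<le> g a"
  define Z where "Z = {t \<in> {a..b}. g t \<le> g a}"
  have "a \<in> Z" using \<open>a \<le> b\<close> by (simp add: Z_def)
  have bdd: "bdd_above Z" unfolding Z_def by (rule bdd_aboveI[of _ b]) auto
  have "closed Z"
    unfolding Z_def using cont by (intro continuous_on_closed_Collect_le) auto
  then have "Sup Z \<in> Z"
    using \<open>a \<in> Z\<close> bdd by (intro closed_contains_Sup) auto
  define s where "s = Sup Z"
  have "a \<le> s" "s < b" "g s \<le> g a"
    using \<open>Sup Z \<in> Z\<close> \<open>\<not> g b \<le> g a\<close> unfolding s_def Z_def by (auto simp: order.order_iff_strict)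
  then obtain \<delta> where "\<delta> > 0" and \<delta>: "\<And>h. 0 < h \<Longrightarrow> h < \<delta> \<Longrightarrow> g (s + h) \<le> g s"
    using right[of s] by auto
  define t where "t = min (s + \<delta> / 2) b"
  have "s < t" and "t - s < \<delta>"
    using \<open>s < b\<close> \<open>\<delta> > 0\<close> by (auto simp: t_def min_def)
  then have "g t \<le> g a"
    using \<delta>[of "t - s"] \<open>g s \<le> g a\<close> by simp
  then have "t \<in> Z"
    using \<open>a \<le> s\<close> \<open>s < t\<close> by (simp add: Z_def t_def)
  then have "t \<le> s"
    unfolding s_def using bdd by (rule cSup_upper)
  with \<open>s < t\<close> show False by simp
qed

lemma le_if_right_derivative_nonpos:
  fixes f :: "real \<Rightarrow> real"
  assumes "a \<le> b" and cont: "continuous_on {a..b} f"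
    and f': "\<And>t. t \<in> {a..<b} \<Longrightarrow> (f has_real_derivative f' t) (at t within {t..})"
    and nonpos: "\<And>t. t \<in> {a..<b} \<Longrightarrow> f' t \<le> 0"
  shows "f b \<le> f a"
proof (rule field_le_epsilon)
  fix e :: real assume "e > 0"
  define k where "k = e / (b - a + 1)"
  have "k > 0" using \<open>e > 0\<close> \<open>a \<le> b\<close> by (simp add: k_def)
  have "f b - k * b \<le> f a - k * a"
  proof (rule le_if_locally_nonincreasing_right[OF \<open>a \<le> b\<close>])
    show "continuous_on {a..b} (\<lambda>t. f t - k * t)"
      by (intro continuous_intros cont)
    fix t assume t: "t \<in> {a..<b}"
    have "((\<lambda>t. f t - k * t) has_real_derivative f' t - k) (at t within {t..})"
      using f'[OF t] by (auto intro!: derivative_eq_intros)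
    moreover have "f' t - k < 0"
      using nonpos[OF t] \<open>k > 0\<close> by simp
    ultimately obtain \<delta> where "\<delta> > 0"
      and \<delta>: "\<forall>h>0. t + h \<in> {t..} \<longrightarrow> h < \<delta> \<longrightarrow> f (t + h) - k * (t + h) < f t - k * t"
      by (blast dest: has_real_derivative_neg_dec_right)
    then show "\<exists>\<delta>>0. \<forall>h>0. h < \<delta> \<longrightarrow> f (t + h) - k * (t + h) \<le> f t - k * t"
      by (auto intro: less_imp_le)
  qed
  moreover have "k * (b - a) \<le> e"
    using \<open>e > 0\<close> \<open>a \<le> b\<close> by (simp add: k_def field_simps)
  ultimately show "f b \<le> f a + e" by (simp add: algebra_simps)
qed

text \<open>The right derivative of \<open>\<bar>f\<bar>\<close> at a point where \<open>f = x\<close> and \<open>f' = d\<close>.\<close>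
definition abs_dir_deriv :: "real \<Rightarrow> real \<Rightarrow> real" where
  "abs_dir_deriv x d = (if x > 0 then d else if x < 0 then - d else \<bar>d\<bar>)"

lemma abs_dir_deriv_add: "abs_dir_deriv x (d + d') \<le> abs_dir_deriv x d + abs_dir_deriv x d'"
  by (auto simp: abs_dir_deriv_def)

lemma abs_dir_deriv_sum:
  "finite I \<Longrightarrow> abs_dir_deriv x (\<Sum>i\<in>I. d i) \<le> (\<Sum>i\<in>I. abs_dir_deriv x (d i))"
proof (induction I rule: finite_induct)
  case (insert i I)
  then show ?case using abs_dir_deriv_add[of x "d i" "sum d I"] by simp
qed (simp add: abs_dir_deriv_def)

lemma abs_dir_deriv_mult: "r \<ge> 0 \<Longrightarrow> abs_dir_deriv x (r * d) = r * abs_dir_deriv x d"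
  by (auto simp: abs_dir_deriv_def abs_mult)

lemma abs_dir_deriv_diff_mult_self: "abs_dir_deriv x (d - k * x) = abs_dir_deriv x d - k * \<bar>x\<bar>"
  by (auto simp: abs_dir_deriv_def)

lemma abs_dir_deriv_le: "(x \<le> 0 \<Longrightarrow> d \<ge> 0) \<Longrightarrow> abs_dir_deriv x d \<le> d"
  by (auto simp: abs_dir_deriv_def)

lemma abs_dir_deriv_le_minus: "(x \<ge> 0 \<Longrightarrow> d \<le> 0) \<Longrightarrow> abs_dir_deriv x d \<le> - d"
  by (auto simp: abs_dir_deriv_def)

lemma has_real_derivative_abs_right:
  fixes f :: "real \<Rightarrow> real"
  assumes f': "(f has_real_derivative f') (at t within {t..})"
  shows "((\<lambda>s. \<bar>f s\<bar>) has_real_derivative abs_dir_deriv (f t) f') (at t within {t..})"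
proof -
  have f_lim: "(f \<longlongrightarrow> f t) (at t within {t..})"
    using DERIV_continuous[OF f'] by (simp add: continuous_within)
  consider "f t > 0" | "f t < 0" | "f t = 0" by linarith
  then show ?thesis
  proof cases
    case 1
    have "eventually (\<lambda>s. \<bar>f s\<bar> = f s) (at t within {t..})"
      using order_tendstoD(1)[OF f_lim 1] by eventually_elim simp
    then show ?thesis
      using f' 1 by (subst has_field_derivative_cong_eventually) (auto simp: abs_dir_deriv_def)
  next
    case 2
    have "eventually (\<lambda>s. \<bar>f s\<bar> = - f s) (at t within {t..})"
      using order_tendstoD(2)[OF f_lim 2] by eventually_elim simp
    then show ?thesis
      using DERIV_minus[OF f'] 2
      by (subst has_field_derivative_cong_eventually) (auto simp: abs_dir_deriv_def)
  next
    case 3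
    have "eventually (\<lambda>s. \<bar>(f s - f t) / (s - t)\<bar> = (\<bar>f s\<bar> - \<bar>f t\<bar>) / (s - t)) (at t within {t..})"
      by (auto simp: eventually_at_filter 3)
    moreover have "((\<lambda>s. \<bar>(f s - f t) / (s - t)\<bar>) \<longlongrightarrow> \<bar>f'\<bar>) (at t within {t..})"
      using f' by (intro tendsto_rabs) (simp add: has_field_derivative_iff)
    ultimately show ?thesis
      unfolding has_field_derivative_iff using 3
      by (auto simp: abs_dir_deriv_def intro: Lim_transform_eventually)
  qed
qed

lemma l1_distance_right_derivative:
  fixes F :: "(nat \<Rightarrow> real) \<Rightarrow> nat \<Rightarrow> real" and q :: "real \<Rightarrow> nat \<Rightarrow> real"
  assumes equilibrium: "\<And>j. j < n \<Longrightarrow> F y j = y j / T"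
    and trajectory: "\<And>j. j < n \<Longrightarrow>
      ((\<lambda>s. q s j) has_real_derivative F (q t) j - q t j / T) (at t within {t..})"
  shows "((\<lambda>s. \<Sum>j<n. \<bar>q s j - y j\<bar>) has_real_derivative
      (\<Sum>j<n. abs_dir_deriv (q t j - y j) (F (q t) j - F y j)) - (\<Sum>j<n. \<bar>q t j - y j\<bar>) / T)
      (at t within {t..})"
proof -
  have e': "((\<lambda>s. q s j - y j) has_real_derivative (F (q t) j - F y j) - 1 / T * (q t j - y j))
      (at t within {t..})" if "j < n" for j
    using DERIV_diff[OF trajectory[OF that] DERIV_const[of "y j"]]
    by (rule DERIV_cong) (use equilibrium[OF that] in \<open>simp add: algebra_simps diff_divide_distrib\<close>)
  have "((\<lambda>s. \<Sum>j<n. \<bar>q s j - y j\<bar>) has_real_derivative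
      (\<Sum>j<n. abs_dir_deriv (q t j - y j) ((F (q t) j - F y j) - 1 / T * (q t j - y j))))
      (at t within {t..})"
    by (rule DERIV_sum, rule has_real_derivative_abs_right, rule e') simp
  then show ?thesis
    unfolding abs_dir_deriv_diff_mult_self by (simp add: sum_subtractf sum_divide_distrib)
qed

lemma l1_distance_exp_decay:
  fixes F :: "(nat \<Rightarrow> real) \<Rightarrow> nat \<Rightarrow> real" and q :: "real \<Rightarrow> nat \<Rightarrow> real"
  assumes "T > 0"
    and dissipative: "\<And>x. (\<Sum>j<n. abs_dir_deriv (x j - y j) (F x j - F y j)) \<le> 0"
    and equilibrium: "\<And>j. j < n \<Longrightarrow> F y j = y j / T"
    and trajectory: "\<And>t j. t \<ge> 0 \<Longrightarrow> j < n \<Longrightarrow>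
      ((\<lambda>s. q s j) has_real_derivative F (q t) j - q t j / T) (at t within {0..})"
    and "t \<ge> 0"
  shows "(\<Sum>j<n. \<bar>q t j - y j\<bar>) \<le> (\<Sum>j<n. \<bar>q 0 j - y j\<bar>) * exp (- t / T)"
proof -
  define L where "L s = (\<Sum>j<n. \<bar>q s j - y j\<bar>)" for s
  define D where "D s = (\<Sum>j<n. abs_dir_deriv (q s j - y j) (F (q s) j - F y j))" for s
  have L': "(L has_real_derivative D s - L s / T) (at s within {s..})" if "s \<ge> 0" for s
    unfolding L_def[abs_def] D_def
  proof (rule l1_distance_right_derivative)
    show "F y j = y j / T" if "j < n" for j
      using that by (rule equilibrium)
    show "((\<lambda>s. q s j) has_real_derivative F (q s) j - q s j / T) (at s within {s..})" if "j < n" for j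
      by (rule DERIV_subset[OF trajectory[OF \<open>s \<ge> 0\<close> that]]) (use \<open>s \<ge> 0\<close> in auto)
  qed
  define h where "h s = L s * exp (s / T)" for s
  have "h t \<le> h 0"
  proof (rule le_if_right_derivative_nonpos[OF \<open>t \<ge> 0\<close>])
    have "continuous_on {0..t} (\<lambda>s. q s j)" if "j < n" for j
    proof (rule continuous_on_subset)
      show "continuous_on {0..} (\<lambda>s. q s j)"
        using trajectory that by (intro DERIV_continuous_on) auto
    qed auto
    then show "continuous_on {0..t} h"
      unfolding h_def L_def using \<open>T > 0\<close> by (intro continuous_intros) auto
    fix s assume "s \<in> {0..<t}"
    have "((\<lambda>s. exp (s / T)) has_real_derivative exp (s / T) * (1 / T)) (at s within {s..})"
      using \<open>T > 0\<close> by (auto intro!: derivative_eq_intros)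
    from DERIV_mult'[OF L' this] \<open>s \<in> {0..<t}\<close>
    have "(h has_real_derivative L s * (exp (s / T) * (1 / T)) + (D s - L s / T) * exp (s / T))
        (at s within {s..})"
      by (simp add: h_def[abs_def])
    then show "(h has_real_derivative exp (s / T) * D s) (at s within {s..})"
      by (rule DERIV_cong) (simp add: algebra_simps)
    show "exp (s / T) * D s \<le> 0"
      using dissipative by (simp add: D_def mult_nonneg_nonpos)
  qed
  then have "L t * exp (t / T) * exp (- t / T) \<le> L 0 * exp (- t / T)"
    by (simp add: h_def)
  then show ?thesis
    by (simp add: L_def mult.assoc flip: exp_add)
qed

lemma tendsto_equilibrium_if_l1_dissipative:
  fixes F :: "(nat \<Rightarrow> real) \<Rightarrow> nat \<Rightarrow> real" and q :: "real \<Rightarrow> nat \<Rightarrow> real"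
  assumes "T > 0"
    and "\<And>x. (\<Sum>j<n. abs_dir_deriv (x j - y j) (F x j - F y j)) \<le> 0"
    and "\<And>j. j < n \<Longrightarrow> F y j = y j / T"
    and "\<And>t j. t \<ge> 0 \<Longrightarrow> j < n \<Longrightarrow>
      ((\<lambda>s. q s j) has_real_derivative F (q t) j - q t j / T) (at t within {0..})"
    and "j < n"
  shows "((\<lambda>t. q t j) \<longlongrightarrow> y j) at_top"
proof -
  define C where "C = (\<Sum>j<n. \<bar>q 0 j - y j\<bar>)"
  have "\<bar>q t j - y j\<bar> \<le> C * exp (- t / T)" if "t \<ge> 0" for t
  proof -
    have "\<bar>q t j - y j\<bar> \<le> (\<Sum>j<n. \<bar>q t j - y j\<bar>)"
      using \<open>j < n\<close> by (intro member_le_sum) auto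
    also have "\<dots> \<le> C * exp (- t / T)"
      unfolding C_def using assms that by (intro l1_distance_exp_decay)
    finally show ?thesis .
  qed
  then have "eventually (\<lambda>t. norm (q t j - y j) \<le> C * exp (- t / T)) at_top"
    by (intro eventually_at_top_linorderI[of 0]) simp
  moreover have "((\<lambda>t. C * exp (- t / T)) \<longlongrightarrow> 0) at_top"
    using \<open>T > 0\<close> by real_asymp
  ultimately have "((\<lambda>t. q t j - y j) \<longlongrightarrow> 0) at_top"
    by (rule Lim_null_comparison)
  then show ?thesis
    by (simp add: LIM_zero_iff)
qed

lemma sum_abs_dir_deriv_normalized_diff_nonpos:
  fixes a b x :: "nat \<Rightarrow> real"
  assumes a_pos: "\<And>j. j < n \<Longrightarrow> a j > 0" and b_pos: "\<And>j. j < n \<Longrightarrow> b j > 0"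
    and nonpos: "\<And>j. j < n \<Longrightarrow> x j \<le> 0 \<Longrightarrow> b j \<le> a j"
    and nonneg: "\<And>j. j < n \<Longrightarrow> x j \<ge> 0 \<Longrightarrow> a j \<le> b j"
  shows "(\<Sum>j<n. abs_dir_deriv (x j) (a j / (\<Sum>k<n. a k) - b j / (\<Sum>k<n. b k))) \<le> 0"
proof (cases "n = 0")
  case False
  define A where "A = (\<Sum>k<n. a k)"
  define B where "B = (\<Sum>k<n. b k)"
  have "A > 0" "B > 0"
    unfolding A_def B_def using False a_pos b_pos by (auto intro: sum_pos)
  have sum_zero: "(\<Sum>j<n. a j / A - b j / B) = 0"
    using \<open>A > 0\<close> \<open>B > 0\<close> by (simp add: sum_subtractf A_def B_def flip: sum_divide_distrib)
  txt \<open>The differences sum to zero. If \<open>A \<le> B\<close> they are nonnegative wherever \<open>x j \<le> 0\<close>, so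
    every term is at most the difference itself; symmetrically if \<open>B < A\<close>.\<close>
  show ?thesis
  proof (cases "A \<le> B")
    case True
    have "a j / A - b j / B \<ge> 0" if "j < n" "x j \<le> 0" for j
    proof -
      have "b j / B \<le> b j / A"
        using b_pos[OF that(1)] \<open>A > 0\<close> True by (intro divide_left_mono) auto
      also have "\<dots> \<le> a j / A"
        using nonpos[OF that] \<open>A > 0\<close> by (intro divide_right_mono) auto
      finally show ?thesis by simp
    qed
    then have "(\<Sum>j<n. abs_dir_deriv (x j) (a j / A - b j / B)) \<le> (\<Sum>j<n. a j / A - b j / B)"
      by (intro sum_mono abs_dir_deriv_le) auto
    then show ?thesis using sum_zero by (simp add: A_def B_def)
  next
    case False
    have "a j / A - b j / B \<le> 0" if "j < n" "x j \<ge> 0" for j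
    proof -
      have "a j / A \<le> b j / A"
        using nonneg[OF that] \<open>A > 0\<close> by (intro divide_right_mono) auto
      also have "\<dots> \<le> b j / B"
        using b_pos[OF that(1)] \<open>B > 0\<close> False by (intro divide_left_mono) auto
      finally show ?thesis by simp
    qed
    then have "(\<Sum>j<n. abs_dir_deriv (x j) (a j / A - b j / B)) \<le> (\<Sum>j<n. - (a j / A - b j / B))"
      by (intro sum_mono abs_dir_deriv_le_minus) auto
    also have "\<dots> = 0"
      using sum_zero by (simp only: sum_negf neg_equal_0_iff_equal)
    finally show ?thesis by (simp add: A_def B_def)
  qed
qed simp

lemma mono_price:
  assumes "c > 0" "T \<ge> 0"
  shows "mono (price T c)"
proof
  fix x y :: real assume "x \<le> y"
  have "c / y \<le> c / x" if "c < x" using that assms \<open>x \<le> y\<close> by (intro divide_left_mono) auto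
  moreover have "c / y < 1" if "c < y" using that assms by auto
  ultimately show "price T c x \<le> price T c y"
    using assms \<open>x \<le> y\<close> by (auto simp: price_def mult_left_mono)
qed

lemma isCont_price:
  assumes "c > 0"
  shows "isCont (price T c) x"
proof -
  have "price T c = (\<lambda>x. T * (1 - c / max x c))"
    using assms by (auto simp: price_def max_def)
  then show ?thesis
    using assms by (auto intro!: continuous_intros)
qed

lemma logit_cong:
  assumes "j < n" "\<And>k. k < n \<Longrightarrow> mu k = mu' k"
  shows "logit n eps kappa mu i j = logit n eps kappa mu' i j"
  using assms by (simp add: logit_def)

lemma tendsto_logit:
  assumes "n > 0" "j < n" "\<And>k. k < n \<Longrightarrow> ((\<lambda>t. mu t k) \<longlongrightarrow> mu' k) F"
  shows "((\<lambda>t. logit n eps kappa (mu t) i j) \<longlongrightarrow> logit n eps kappa mu' i j) F"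
proof -
  have "(\<Sum>k<n. exp (- (kappa i k + mu' k) / eps)) > 0"
    using \<open>n > 0\<close> by (intro sum_pos) auto
  then show ?thesis
    unfolding logit_def divide_inverse using assms by (auto intro!: tendsto_intros)
qed

lemma sum_abs_dir_deriv_logit_diff_nonpos:
  assumes "eps > 0"
    and nonpos: "\<And>j. j < n \<Longrightarrow> x j \<le> 0 \<Longrightarrow> mu j \<le> mu' j"
    and nonneg: "\<And>j. j < n \<Longrightarrow> x j \<ge> 0 \<Longrightarrow> mu' j \<le> mu j"
  shows "(\<Sum>j<n. abs_dir_deriv (x j) (logit n eps kappa mu i j - logit n eps kappa mu' i j)) \<le> 0"
  unfolding logit_def
proof (rule sum_abs_dir_deriv_normalized_diff_nonpos)
  fix j assume "j < n"
  show "x j \<le> 0 \<Longrightarrow> exp (- (kappa i j + mu' j) / eps) \<le> exp (- (kappa i j + mu j) / eps)"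
    using nonpos[OF \<open>j < n\<close>] \<open>eps > 0\<close> by (simp add: divide_right_mono)
  show "x j \<ge> 0 \<Longrightarrow> exp (- (kappa i j + mu j) / eps) \<le> exp (- (kappa i j + mu' j) / eps)"
    using nonneg[OF \<open>j < n\<close>] \<open>eps > 0\<close> by (simp add: divide_right_mono)
qed auto

lemma logit_arrivals_l1_dissipative:
  fixes p :: "nat \<Rightarrow> real \<Rightarrow> real" and kappa :: "nat \<Rightarrow> nat \<Rightarrow> real" and x y :: "nat \<Rightarrow> real"
  assumes "eps > 0" and r_nonneg: "\<And>i. i < m \<Longrightarrow> r i \<ge> 0"
    and p_mono: "\<And>j. j < n \<Longrightarrow> mono (p j)"
  defines "F z j \<equiv> \<Sum>i<m. r i * logit n eps kappa (\<lambda>k. p k (z k)) i j"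
  shows "(\<Sum>j<n. abs_dir_deriv (x j - y j) (F x j - F y j)) \<le> 0"
proof -
  define \<delta> where "\<delta> i j = logit n eps kappa (\<lambda>k. p k (x k)) i j - logit n eps kappa (\<lambda>k. p k (y k)) i j"
    for i j
  have "(\<Sum>j<n. abs_dir_deriv (x j - y j) (F x j - F y j))
      \<le> (\<Sum>j<n. \<Sum>i<m. r i * abs_dir_deriv (x j - y j) (\<delta> i j))"
  proof (rule sum_mono)
    fix j
    have "F x j - F y j = (\<Sum>i<m. r i * \<delta> i j)"
      by (simp add: F_def \<delta>_def sum_subtractf right_diff_distrib)
    then have "abs_dir_deriv (x j - y j) (F x j - F y j)
        \<le> (\<Sum>i<m. abs_dir_deriv (x j - y j) (r i * \<delta> i j))"
      by (simp add: abs_dir_deriv_sum)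
    also have "\<dots> = (\<Sum>i<m. r i * abs_dir_deriv (x j - y j) (\<delta> i j))"
      using r_nonneg by (simp add: abs_dir_deriv_mult)
    finally show "abs_dir_deriv (x j - y j) (F x j - F y j)
        \<le> (\<Sum>i<m. r i * abs_dir_deriv (x j - y j) (\<delta> i j))" .
  qed
  also have "\<dots> = (\<Sum>i<m. r i * (\<Sum>j<n. abs_dir_deriv (x j - y j) (\<delta> i j)))"
    by (subst sum.swap) (simp add: sum_distrib_left)
  also have "\<dots> \<le> 0"
  proof (rule sum_nonpos)
    fix i assume "i \<in> {..<m}"
    have "(\<Sum>j<n. abs_dir_deriv (x j - y j) (\<delta> i j)) \<le> 0"
      unfolding \<delta>_def using \<open>eps > 0\<close> p_mono
      by (intro sum_abs_dir_deriv_logit_diff_nonpos) (auto dest: monoD)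
    then show "r i * (\<Sum>j<n. abs_dir_deriv (x j - y j) (\<delta> i j)) \<le> 0"
      using r_nonneg \<open>i \<in> {..<m}\<close> by (simp add: mult_nonneg_nonpos)
  qed
  finally show ?thesis .
qed

theorem theorem2:
  fixes n m :: nat and c r :: "nat \<Rightarrow> real" and T eps :: real
    and kappa :: "nat \<Rightarrow> nat \<Rightarrow> real"
    and qs mus :: "nat \<Rightarrow> real" and Xs :: "nat \<Rightarrow> nat \<Rightarrow> real"
    and q :: "real \<Rightarrow> nat \<Rightarrow> real"
  assumes "n \<ge> 1" and "m \<ge> 1"
    and c_pos: "\<forall>j<n. c j > 0" and "T > 0" and "eps > 0"
    and r_pos: "\<forall>i<m. r i > 0"
    and kappa_nonneg: "\<forall>i<m. \<forall>j<n. kappa i j \<ge> 0"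
    and eq_mu: "\<forall>j<n. mus j = price T (c j) (qs j)"
    and eq_X: "\<forall>i<m. \<forall>j<n. Xs i j = r i * logit n eps kappa mus i j"
    and eq_q: "\<forall>j<n. (\<Sum>i<m. Xs i j) = qs j / T"
    and traj: "\<forall>t\<ge>0. \<forall>j<n.
        ((\<lambda>s. q s j) has_real_derivative
           ((\<Sum>i<m. r i * logit n eps kappa (\<lambda>k. price T (c k) (q t k)) i j) - q t j / T))
        (at t within {0..})"
  shows "(\<forall>j<n. ((\<lambda>t. q t j) \<longlongrightarrow> qs j) at_top)
       \<and> (\<forall>j<n. ((\<lambda>t. price T (c j) (q t j)) \<longlongrightarrow> mus j) at_top)
       \<and> (\<forall>i<m. \<forall>j<n. ((\<lambda>t. r i * logit n eps kappa (\<lambda>k. price T (c k) (q t k)) i j)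
                          \<longlongrightarrow> Xs i j) at_top)"
proof -
  define F where "F x j = (\<Sum>i<m. r i * logit n eps kappa (\<lambda>k. price T (c k) (x k)) i j)" for x j
  have dissipative: "(\<Sum>j<n. abs_dir_deriv (x j - qs j) (F x j - F qs j)) \<le> 0" for x
    unfolding F_def using \<open>eps > 0\<close> \<open>T > 0\<close> r_pos c_pos
    by (intro logit_arrivals_l1_dissipative) (auto intro: mono_price less_imp_le)
  have equilibrium: "F qs j = qs j / T" if "j < n" for j
  proof -
    have "logit n eps kappa (\<lambda>k. price T (c k) (qs k)) i j = logit n eps kappa mus i j" for i
      using eq_mu that by (intro logit_cong) auto
    then show ?thesis
      using eq_X eq_q that by (simp add: F_def)
  qed
  have q_lim: "((\<lambda>t. q t j) \<longlongrightarrow> qs j) at_top" if "j < n" for j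
    by (rule tendsto_equilibrium_if_l1_dissipative[OF \<open>T > 0\<close> dissipative equilibrium])
       (use traj that in \<open>auto simp: F_def\<close>)
  have price_lim: "((\<lambda>t. price T (c j) (q t j)) \<longlongrightarrow> mus j) at_top" if "j < n" for j
    using isCont_tendsto_compose[OF isCont_price q_lim] c_pos eq_mu that by auto
  have "((\<lambda>t. r i * logit n eps kappa (\<lambda>k. price T (c k) (q t k)) i j) \<longlongrightarrow> Xs i j) at_top"
    if "i < m" "j < n" for i j
    using eq_X that \<open>n \<ge> 1\<close> price_lim by (auto intro!: tendsto_mult_left tendsto_logit)
  then show ?thesis
    using q_lim price_lim by blast
qed

end
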